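(* (Euler's formula for the number of spanning trees.) Let $G$ be a connected graph in which each edge $e_i$ has end points $p_i,q_i$. For any $s,t\in V(G)$, $$t(G_{st})=k\,t(G)+\frac{1}{4t(G)}\sum_{\substack{e_i\in E(G)\\ e_i\text{ not a bridge}}}\big[t(G_{p_is})-t(G_{p_it})-t(G_{q_is})+t(G_{q_it})\big]^2,$$ where $k$ is the number of bridges lying on any path connecting $s$ and $t$. Equivalently, $$t(G_{st})=\frac{1}{4t(G)}\sum_{e_i\in E(G)}\big[t(G_{p_is})-t(G_{p_it})-t(G_{q_is})+t(G_{q_it})\big]^2.$$
   Context: Graphs are finite and may have multiple edges and loops; $t(H)$ is the number of spanning trees of $H$; a graph with one vertex has $t=1$. $G_{xy}$ denotes the graph obtained from $G$ by identifying vertices $x$ and $y$, with the convention $t(G_{xx}):=0$. A bridge is an edge whose deletion disconnects $G$. *)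

theory Defs
  imports Complex_Main
begin

text \<open>A finite multigraph (multiple edges and loops allowed) is given by a vertex set
  V :: 'a set, an edge set E :: 'e set and an endpoint map ends :: 'e => 'a * 'a;
  edge e has end points fst (ends e) and snd (ends e).\<close>

definition multigraph :: "'a set \<Rightarrow> 'e set \<Rightarrow> ('e \<Rightarrow> 'a \<times> 'a) \<Rightarrow> bool" where
  "multigraph V E ends \<longleftrightarrow> finite V \<and> finite E \<and>
     (\<forall>e\<in>E. fst (ends e) \<in> V \<and> snd (ends e) \<in> V)"

definition adj :: "('e \<Rightarrow> 'a \<times> 'a) \<Rightarrow> 'e set \<Rightarrow> 'a \<Rightarrow> 'a \<Rightarrow> bool" where
  "adj ends F x y \<longleftrightarrow> (\<exists>e\<in>F. ends e = (x, y) \<or> ends e = (y, x))"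

definition reach :: "('e \<Rightarrow> 'a \<times> 'a) \<Rightarrow> 'e set \<Rightarrow> 'a \<Rightarrow> 'a \<Rightarrow> bool" where
  "reach ends F = (adj ends F)\<^sup>*\<^sup>*"

definition connected_on :: "'a set \<Rightarrow> 'e set \<Rightarrow> ('e \<Rightarrow> 'a \<times> 'a) \<Rightarrow> bool" where
  "connected_on V F ends \<longleftrightarrow> (\<forall>x\<in>V. \<forall>y\<in>V. reach ends F x y)"

definition connected_graph :: "'a set \<Rightarrow> 'e set \<Rightarrow> ('e \<Rightarrow> 'a \<times> 'a) \<Rightarrow> bool" where
  "connected_graph V E ends \<longleftrightarrow> multigraph V E ends \<and> V \<noteq> {} \<and> connected_on V E ends"

text \<open>An edge set F is acyclic if no edge of F lies on a cycle of F, i.e. for no e in F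
  are its end points joined in F - {e} (a loop is a cycle).\<close>
definition acyclic_edges :: "'e set \<Rightarrow> ('e \<Rightarrow> 'a \<times> 'a) \<Rightarrow> bool" where
  "acyclic_edges F ends \<longleftrightarrow>
     (\<forall>e\<in>F. \<not> reach ends (F - {e}) (fst (ends e)) (snd (ends e)))"

definition spanning_tree :: "'a set \<Rightarrow> 'e set \<Rightarrow> ('e \<Rightarrow> 'a \<times> 'a) \<Rightarrow> 'e set \<Rightarrow> bool" where
  "spanning_tree V E ends T \<longleftrightarrow> T \<subseteq> E \<and> connected_on V T ends \<and> acyclic_edges T ends"

definition num_trees :: "'a set \<Rightarrow> 'e set \<Rightarrow> ('e \<Rightarrow> 'a \<times> 'a) \<Rightarrow> nat" where
  "num_trees V E ends = card {T. spanning_tree V E ends T}"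

text \<open>G_xy: identify y with x. Convention t(G_xx) = 0.\<close>
definition ident :: "'a \<Rightarrow> 'a \<Rightarrow> 'a \<Rightarrow> 'a" where
  "ident x y v = (if v = y then x else v)"

definition num_trees_ident :: "'a set \<Rightarrow> 'e set \<Rightarrow> ('e \<Rightarrow> 'a \<times> 'a) \<Rightarrow> 'a \<Rightarrow> 'a \<Rightarrow> nat" where
  "num_trees_ident V E ends x y =
     (if x = y then 0
      else num_trees (ident x y ` V) E (map_prod (ident x y) (ident x y) \<circ> ends))"

definition is_bridge :: "'a set \<Rightarrow> 'e set \<Rightarrow> ('e \<Rightarrow> 'a \<times> 'a) \<Rightarrow> 'e \<Rightarrow> bool" where
  "is_bridge V E ends e \<longleftrightarrow> e \<in> E \<and> \<not> connected_on V (E - {e}) ends"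

definition is_path :: "'a set \<Rightarrow> 'e set \<Rightarrow> ('e \<Rightarrow> 'a \<times> 'a) \<Rightarrow> 'a \<Rightarrow> 'a \<Rightarrow> 'a list \<Rightarrow> 'e list \<Rightarrow> bool" where
  "is_path V E ends s t vs es \<longleftrightarrow>
     length vs = length es + 1 \<and> hd vs = s \<and> last vs = t \<and> distinct vs \<and> set vs \<subseteq> V \<and>
     (\<forall>i < length es. es ! i \<in> E \<and>
        (ends (es ! i) = (vs ! i, vs ! Suc i) \<or> ends (es ! i) = (vs ! Suc i, vs ! i)))"

definition bridges_between :: "'a set \<Rightarrow> 'e set \<Rightarrow> ('e \<Rightarrow> 'a \<times> 'a) \<Rightarrow> 'a \<Rightarrow> 'a \<Rightarrow> nat" where
  "bridges_between V E ends s t =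
     card {e. is_bridge V E ends e \<and> (\<exists>vs es. is_path V E ends s t vs es \<and> e \<in> set es)}"

end

theory Submission
  imports Defs
begin

(* Write F(x,y) for the spanning forests of G with two trees, one containing x and the other y;
   these are exactly the spanning trees of G_xy, so t(G_xy) = |F(x,y)|. Let a(v) be the number of
   forests in F(s,t) in which v lies in the tree of t, so a(s) = 0 and a(t) = t(G_st). Sorting
   F(v,s) and F(v,t) by whether they join s and t gives t(G_vs) - t(G_vt) = 2 a(v) - t(G_st), so the
   bracket of the edge e = pq is 2 (a(p) - a(q)).

   Adding e to a forest of F(s,t) that does not join p and q gives, bijectively, the spanning trees T
   through e for which T - e separates s and t; hence a(p) - a(q) is a signed count of these trees.
   Squaring, summing over e and exchanging the sums, each spanning tree T contributes the increments
   of a along its path from s to t, which telescope to a(t) - a(s) = t(G_st): this is the second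
   formula. A bridge e lies in every spanning tree, and T - e has the same components as G - e, so
   its term is 4 t(G)^2 if e separates s from t and 0 otherwise: this is the first formula. *)

lemma finite_minimal_subset:
  assumes "finite F" and "P F"
  shows "\<exists>F'\<subseteq>F. P F' \<and> (\<forall>e\<in>F'. \<not> P (F' - {e}))"
  using assms
proof (induction F rule: finite_psubset_induct)
  case (psubset A)
  show ?case
  proof (cases "\<forall>e\<in>A. \<not> P (A - {e})")
    case False
    then obtain e where "e \<in> A" "P (A - {e})" by blast
    with psubset.IH[of "A - {e}"] show ?thesis by blast
  qed (use psubset in blast)
qed

lemma card_eq_card_filter_add_card_filter_not:
  "finite A \<Longrightarrow> card A = card {x \<in> A. P x} + card {x \<in> A. \<not> P x}"
  by (subst card_Un_disjoint[symmetric]) (auto intro: arg_cong[where f = card])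

lemma sum_filter_add_sum_filter_not:
  "finite A \<Longrightarrow> sum f {x \<in> A. P x} + sum f {x \<in> A. \<not> P x} = sum f A"
  by (simp add: sum.inter_filter flip: sum.distrib) (auto intro: sum.cong)

section \<open>Reachability\<close>

lemma adj_sym: "adj ends F x y \<Longrightarrow> adj ends F y x"
  unfolding adj_def by blast

lemma adj_mono: "adj ends F x y \<Longrightarrow> F \<subseteq> G \<Longrightarrow> adj ends G x y"
  unfolding adj_def by blast

lemma reach_refl [simp]: "reach ends F x x"
  unfolding reach_def by simp

lemma reach_trans: "reach ends F x y \<Longrightarrow> reach ends F y z \<Longrightarrow> reach ends F x z"
  unfolding reach_def by (rule rtranclp_trans)

lemma reach_if_adj: "adj ends F x y \<Longrightarrow> reach ends F x y"
  unfolding reach_def by simp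

lemma reach_edge: "e \<in> F \<Longrightarrow> reach ends F (fst (ends e)) (snd (ends e))"
  by (rule reach_if_adj) (auto simp: adj_def)

lemma reach_sym: "reach ends F x y \<Longrightarrow> reach ends F y x"
  unfolding reach_def
proof (induction rule: rtranclp_induct)
  case (step y z)
  then show ?case
    by (meson adj_sym converse_rtranclp_into_rtranclp)
qed simp

lemma reach_commute: "reach ends F x y \<longleftrightarrow> reach ends F y x"
  using reach_sym by metis

lemma reach_edge_ends:
  assumes "e \<in> F" and "ends e = (x, y) \<or> ends e = (y, x)"
  shows "reach ends F x y"
  using assms reach_edge[of e F ends] reach_sym by fastforce

lemma reach_mono: "reach ends F x y \<Longrightarrow> F \<subseteq> G \<Longrightarrow> reach ends G x y"
  unfolding reach_def
proof (induction rule: rtranclp_induct)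
  case (step y z)
  then show ?case
    by (meson adj_mono rtranclp.rtrancl_into_rtrancl)
qed simp

lemma reach_empty_imp_eq: "reach ends {} x y \<Longrightarrow> x = y"
  unfolding reach_def
proof (induction rule: rtranclp_induct)
  case (step y z)
  then show ?case by (simp add: adj_def)
qed simp

lemma reach_remove_edge:
  assumes "reach ends F a b"
  shows "reach ends (F - {e}) a b \<or> (e \<in> F \<and>
     ((reach ends (F - {e}) a (fst (ends e)) \<and> reach ends (F - {e}) (snd (ends e)) b) \<or>
      (reach ends (F - {e}) a (snd (ends e)) \<and> reach ends (F - {e}) (fst (ends e)) b)))"
  using assms unfolding reach_def
proof (induction rule: rtranclp_induct)
  case (step y z)
  from step(2) obtain f where f: "f \<in> F" "ends f = (y, z) \<or> ends f = (z, y)"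
    unfolding adj_def by blast
  show ?case
  proof (cases "f = e")
    case False
    then have "adj ends (F - {e}) y z"
      using f unfolding adj_def by blast
    then show ?thesis
      using step(3) by (meson rtranclp.rtrancl_into_rtrancl rtranclp_trans)
  next
    case True
    then show ?thesis
      using step(3) f by auto
  qed
qed simp

lemma reach_remove_cycle_edge:
  assumes "reach ends (F - {e}) (fst (ends e)) (snd (ends e))" and "reach ends F a b"
  shows "reach ends (F - {e}) a b"
  using reach_remove_edge[OF assms(2), of e] assms(1)
  by (meson reach_sym reach_trans)

lemma reach_split_at_edge:
  assumes "finite F" and "reach ends F x y" and "x \<noteq> y"
  shows "\<exists>e\<in>F. (reach ends (F - {e}) x (fst (ends e)) \<and> reach ends (F - {e}) (snd (ends e)) y) \<or>
                (reach ends (F - {e}) x (snd (ends e)) \<and> reach ends (F - {e}) (fst (ends e)) y)"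
proof -
  obtain F' where F': "F' \<subseteq> F" "reach ends F' x y" "\<forall>e\<in>F'. \<not> reach ends (F' - {e}) x y"
    using finite_minimal_subset[of F "\<lambda>F. reach ends F x y"] assms by blast
  have "F' \<noteq> {}"
    using F'(2) assms(3) reach_empty_imp_eq by metis
  then obtain e where e: "e \<in> F'" by blast
  have "reach ends (F' - {e}) u w \<Longrightarrow> reach ends (F - {e}) u w" for u w
    using reach_mono F'(1) by (metis Diff_mono order_refl)
  with reach_remove_edge[OF F'(2), of e] F'(3) e F'(1) show ?thesis
    by blast
qed

lemma acyclic_edges_subset: "acyclic_edges F ends \<Longrightarrow> G \<subseteq> F \<Longrightarrow> acyclic_edges G ends"
  unfolding acyclic_edges_def by (meson Diff_mono order_refl reach_mono subsetD)

lemma acyclic_edges_insert: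
  assumes acy: "acyclic_edges F ends" and sep: "\<not> reach ends F (fst (ends e)) (snd (ends e))"
  shows "acyclic_edges (insert e F) ends"
  unfolding acyclic_edges_def
proof (intro ballI notI)
  fix f assume f: "f \<in> insert e F" and r: "reach ends (insert e F - {f}) (fst (ends f)) (snd (ends f))"
  have eF: "e \<notin> F"
    using sep reach_edge by metis
  show False
  proof (cases "f = e")
    case True
    then show False using r sep eF by simp
  next
    case False
    then have fF: "f \<in> F" using f by simp
    have "reach ends (F - {f}) (fst (ends f)) (snd (ends f))"
    proof (rule ccontr)
      assume n: "\<not> ?thesis"
      have "insert e F - {f} - {e} = F - {f}" using eF by auto
      then have "reach ends (F - {f}) (fst (ends f)) (fst (ends e)) \<and> reach ends (F - {f}) (snd (ends e)) (snd (ends f))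
          \<or> reach ends (F - {f}) (fst (ends f)) (snd (ends e)) \<and> reach ends (F - {f}) (fst (ends e)) (snd (ends f))"
        using reach_remove_edge[OF r, of e] n by auto
      then have "reach ends F (fst (ends e)) (snd (ends e))"
        using reach_edge[OF fF] reach_mono[of ends "F - {f}" _ _ F]
        by (meson Diff_subset reach_sym reach_trans)
      then show False using sep by simp
    qed
    then show False using acy fF unfolding acyclic_edges_def by blast
  qed
qed

section \<open>Identifying two vertices\<close>

abbreviation ident_ends :: "'a \<Rightarrow> 'a \<Rightarrow> ('e \<Rightarrow> 'a \<times> 'a) \<Rightarrow> 'e \<Rightarrow> 'a \<times> 'a" where
  "ident_ends x y ends \<equiv> map_prod (ident x y) (ident x y) \<circ> ends"

definition glued_reach :: "('e \<Rightarrow> 'a \<times> 'a) \<Rightarrow> 'e set \<Rightarrow> 'a \<Rightarrow> 'a \<Rightarrow> 'a \<Rightarrow> 'a \<Rightarrow> bool" where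
  "glued_reach ends F x y = (\<lambda>u w. adj ends F u w \<or> (u = x \<and> w = y) \<or> (u = y \<and> w = x))\<^sup>*\<^sup>*"

lemma glued_reach_trans:
  "glued_reach ends F x y a b \<Longrightarrow> glued_reach ends F x y b c \<Longrightarrow> glued_reach ends F x y a c"
  unfolding glued_reach_def by (rule rtranclp_trans)

lemma glued_reach_iff:
  "glued_reach ends F x y a b \<longleftrightarrow> reach ends F a b \<or>
     ((reach ends F a x \<or> reach ends F a y) \<and> (reach ends F b x \<or> reach ends F b y))"
proof
  assume "glued_reach ends F x y a b"
  then show "reach ends F a b \<or>
     ((reach ends F a x \<or> reach ends F a y) \<and> (reach ends F b x \<or> reach ends F b y))"
    unfolding glued_reach_def
  proof (induction rule: rtranclp_induct)
    case (step u w)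
    then consider "adj ends F u w" | "u = x \<and> w = y" | "u = y \<and> w = x" by blast
    then show ?case
    proof cases
      case 1
      then have "reach ends F u w" by (rule reach_if_adj)
      then show ?thesis using step(3) by (meson reach_sym reach_trans)
    qed (use step(3) in auto)
  qed simp
next
  have "reach ends F a b \<Longrightarrow> glued_reach ends F x y a b" for a b
    unfolding glued_reach_def reach_def
    by (rule mono_rtranclp[rule_format, of "adj ends F"]) auto
  moreover have "glued_reach ends F x y x y" "glued_reach ends F x y y x"
    unfolding glued_reach_def by auto
  moreover assume "reach ends F a b \<or>
     ((reach ends F a x \<or> reach ends F a y) \<and> (reach ends F b x \<or> reach ends F b y))"
  ultimately show "glued_reach ends F x y a b"
    using glued_reach_trans reach_sym by metis
qed

lemma glued_reach_if_ident_eq: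
  "ident x y u = ident x y w \<Longrightarrow> glued_reach ends F x y u w"
  unfolding glued_reach_def ident_def by (auto split: if_splits)

lemma reach_ident_if_glued_reach:
  assumes "glued_reach ends F x y a b"
  shows "reach (ident_ends x y ends) F (ident x y a) (ident x y b)"
  using assms unfolding glued_reach_def
proof (induction rule: rtranclp_induct)
  case (step u w)
  have "adj ends F u w \<Longrightarrow> adj (ident_ends x y ends) F (ident x y u) (ident x y w)"
    unfolding adj_def by force
  with step(2) have "reach (ident_ends x y ends) F (ident x y u) (ident x y w)"
    by (auto simp: ident_def dest: reach_if_adj)
  then show ?case
    using step(3) reach_trans by metis
qed simp

lemma glued_reach_if_reach_ident:
  assumes "reach (ident_ends x y ends) F (ident x y a) c'"
    and "ident x y c = c'"
  shows "glued_reach ends F x y a c"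
  using assms unfolding reach_def
proof (induction arbitrary: c rule: rtranclp_induct)
  case base
  then show ?case by (simp add: glued_reach_if_ident_eq)
next
  case (step b' c')
  from step(2) obtain e where e: "e \<in> F"
    "(ident x y (fst (ends e)), ident x y (snd (ends e))) = (b', c') \<or>
     (ident x y (fst (ends e)), ident x y (snd (ends e))) = (c', b')"
    unfolding adj_def by (auto simp: map_prod_def split: prod.splits)
  have "glued_reach ends F x y (fst (ends e)) (snd (ends e))"
    "glued_reach ends F x y (snd (ends e)) (fst (ends e))"
    using reach_edge[OF e(1), of ends] reach_sym glued_reach_iff by metis+
  with e(2) step.IH step.prems show ?case
    using glued_reach_if_ident_eq glued_reach_trans by (metis prod.inject)
qed

lemma reach_ident_iff_glued_reach:
  "reach (ident_ends x y ends) F (ident x y a) (ident x y b) \<longleftrightarrow> glued_reach ends F x y a b"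
  using glued_reach_if_reach_ident[OF _ refl] reach_ident_if_glued_reach by (rule iffI)

lemma reach_ident_edge_iff_glued_reach:
  "reach (ident_ends x y ends) F (fst (ident_ends x y ends e)) (snd (ident_ends x y ends e))
     \<longleftrightarrow> glued_reach ends F x y (fst (ends e)) (snd (ends e))"
  by (simp only: comp_apply fst_map_prod snd_map_prod reach_ident_iff_glued_reach)

definition two_forests :: "'a set \<Rightarrow> 'e set \<Rightarrow> ('e \<Rightarrow> 'a \<times> 'a) \<Rightarrow> 'a \<Rightarrow> 'a \<Rightarrow> 'e set set" where
  "two_forests V E ends x y = {F. F \<subseteq> E \<and> acyclic_edges F ends \<and>
      (\<forall>v\<in>V. reach ends F v x \<or> reach ends F v y) \<and> \<not> reach ends F x y}"

lemma two_forests_commute: "two_forests V E ends x y = two_forests V E ends y x"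
  unfolding two_forests_def by (metis reach_commute)

lemma finite_two_forests: "multigraph V E ends \<Longrightarrow> finite (two_forests V E ends x y)"
  unfolding multigraph_def two_forests_def by (simp add: finite_subset[of _ "Pow E"] subset_eq)

lemma two_forest_if_spanning_tree_ident:
  assumes mg: "multigraph V E ends" and xV: "x \<in> V" and xy: "x \<noteq> y"
    and T: "spanning_tree (ident x y ` V) E (ident_ends x y ends) T"
  shows "T \<in> two_forests V E ends x y"
proof -
  have TE: "T \<subseteq> E" and con: "connected_on (ident x y ` V) T (ident_ends x y ends)"
    and acy': "acyclic_edges T (ident_ends x y ends)"
    using T unfolding spanning_tree_def by auto
  have glued_acyclic: "\<not> glued_reach ends (T - {e}) x y (fst (ends e)) (snd (ends e))" if "e \<in> T" for e
    using acy' that unfolding acyclic_edges_def reach_ident_edge_iff_glued_reach by blast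
  then have acy: "acyclic_edges T ends"
    unfolding acyclic_edges_def glued_reach_iff by blast
  have sides: "\<forall>v\<in>V. reach ends T v x \<or> reach ends T v y"
  proof
    fix v assume "v \<in> V"
    then have "reach (ident_ends x y ends) T (ident x y v) (ident x y x)"
      using con xV unfolding connected_on_def by blast
    then show "reach ends T v x \<or> reach ends T v y"
      unfolding reach_ident_iff_glued_reach glued_reach_iff by blast
  qed
  have "\<not> reach ends T x y"
  proof
    assume xy_T: "reach ends T x y"
    have "finite T"
      using TE mg unfolding multigraph_def by (meson finite_subset)
    then obtain e where "e \<in> T" and
      "(reach ends (T - {e}) x (fst (ends e)) \<and> reach ends (T - {e}) (snd (ends e)) y) \<or>
       (reach ends (T - {e}) x (snd (ends e)) \<and> reach ends (T - {e}) (fst (ends e)) y)"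
      using reach_split_at_edge[OF _ xy_T xy] by blast
    then have "(reach ends (T - {e}) (fst (ends e)) x \<or> reach ends (T - {e}) (fst (ends e)) y) \<and>
      (reach ends (T - {e}) (snd (ends e)) x \<or> reach ends (T - {e}) (snd (ends e)) y)"
      by (auto simp: reach_commute[of ends "T - {e}" x] reach_commute[of ends "T - {e}" y])
    with glued_acyclic[OF \<open>e \<in> T\<close>] show False
      unfolding glued_reach_iff by blast
  qed
  with TE acy sides show ?thesis
    unfolding two_forests_def by blast
qed

lemma spanning_tree_ident_if_two_forest:
  assumes F: "F \<in> two_forests V E ends x y"
  shows "spanning_tree (ident x y ` V) E (ident_ends x y ends) F"
proof -
  have FE: "F \<subseteq> E" and acy: "acyclic_edges F ends"
    and sides: "\<forall>v\<in>V. reach ends F v x \<or> reach ends F v y" and nxy: "\<not> reach ends F x y"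
    using F unfolding two_forests_def by auto
  have "connected_on (ident x y ` V) F (ident_ends x y ends)"
    unfolding connected_on_def
  proof (intro ballI)
    fix a' b' assume "a' \<in> ident x y ` V" "b' \<in> ident x y ` V"
    then obtain a b where "a \<in> V" "b \<in> V" "a' = ident x y a" "b' = ident x y b" by blast
    moreover have "glued_reach ends F x y a b"
      using sides \<open>a \<in> V\<close> \<open>b \<in> V\<close> unfolding glued_reach_iff by blast
    ultimately show "reach (ident_ends x y ends) F a' b'"
      by (simp add: reach_ident_iff_glued_reach)
  qed
  moreover have "acyclic_edges F (ident_ends x y ends)"
    unfolding acyclic_edges_def
  proof (intro ballI notI)
    fix e assume eF: "e \<in> F"
      and "reach (ident_ends x y ends) (F - {e}) (fst (ident_ends x y ends e)) (snd (ident_ends x y ends e))"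
    then have glued: "glued_reach ends (F - {e}) x y (fst (ends e)) (snd (ends e))"
      by (simp only: reach_ident_edge_iff_glued_reach)
    have sep: "\<not> reach ends (F - {e}) (fst (ends e)) (snd (ends e))"
      using acy eF unfolding acyclic_edges_def by blast
    with glued have "(reach ends (F - {e}) (fst (ends e)) x \<or> reach ends (F - {e}) (fst (ends e)) y) \<and>
      (reach ends (F - {e}) (snd (ends e)) x \<or> reach ends (F - {e}) (snd (ends e)) y)"
      unfolding glued_reach_iff by blast
    moreover have "reach ends (F - {e}) u w \<Longrightarrow> reach ends F u w" for u w
      using reach_mono by (metis Diff_subset)
    ultimately have "reach ends F x y \<or> reach ends (F - {e}) (fst (ends e)) (snd (ends e))"
      using reach_edge[OF eF] by (meson reach_sym reach_trans)
    with sep nxy show False by blast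
  qed
  ultimately show ?thesis
    unfolding spanning_tree_def using FE by blast
qed

lemma num_trees_ident_eq_card_two_forests:
  assumes "multigraph V E ends" and "x \<in> V"
  shows "num_trees_ident V E ends x y = card (two_forests V E ends x y)"
proof (cases "x = y")
  case True
  then have "two_forests V E ends x y = {}"
    unfolding two_forests_def by auto
  with True show ?thesis
    unfolding num_trees_ident_def by simp
next
  case False
  then have "{T. spanning_tree (ident x y ` V) E (ident_ends x y ends) T} = two_forests V E ends x y"
    using two_forest_if_spanning_tree_ident[OF assms False] spanning_tree_ident_if_two_forest[of _ V E ends x y]
    by blast
  with False show ?thesis
    unfolding num_trees_ident_def num_trees_def by simp
qed

definition spanning_trees :: "'a set \<Rightarrow> 'e set \<Rightarrow> ('e \<Rightarrow> 'a \<times> 'a) \<Rightarrow> 'e set set" where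
  "spanning_trees V E ends = {T. spanning_tree V E ends T}"

lemma finite_spanning_trees: "multigraph V E ends \<Longrightarrow> finite (spanning_trees V E ends)"
  unfolding multigraph_def spanning_trees_def spanning_tree_def
  by (simp add: finite_subset[of _ "Pow E"] subset_eq)

lemma spanning_trees_nonempty:
  assumes "connected_graph V E ends"
  shows "spanning_trees V E ends \<noteq> {}"
proof -
  have mg: "multigraph V E ends" and con: "connected_on V E ends"
    using assms unfolding connected_graph_def by auto
  have "finite E" using mg unfolding multigraph_def by simp
  then obtain T where T: "T \<subseteq> E" "connected_on V T ends" "\<forall>e\<in>T. \<not> connected_on V (T - {e}) ends"
    using finite_minimal_subset[of E "\<lambda>F. connected_on V F ends"] con by blast
  have "acyclic_edges T ends"
    unfolding acyclic_edges_def
  proof (intro ballI notI)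
    fix e assume "e \<in> T" and cycle: "reach ends (T - {e}) (fst (ends e)) (snd (ends e))"
    have "connected_on V (T - {e}) ends"
      using T(2) reach_remove_cycle_edge[OF cycle] unfolding connected_on_def by blast
    with T(3) \<open>e \<in> T\<close> show False by blast
  qed
  with T show ?thesis
    unfolding spanning_trees_def spanning_tree_def by blast
qed

lemma num_trees_pos:
  assumes "connected_graph V E ends"
  shows "num_trees V E ends > 0"
proof -
  have "finite (spanning_trees V E ends)"
    using assms finite_spanning_trees unfolding connected_graph_def by blast
  with spanning_trees_nonempty[OF assms] show ?thesis
    unfolding num_trees_def spanning_trees_def by (simp add: card_gt_0_iff)
qed

lemma spanning_tree_remove_edge_sides:
  assumes mg: "multigraph V E ends" and T: "T \<in> spanning_trees V E ends"
    and e: "e \<in> T" and v: "v \<in> V"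
  shows "reach ends (T - {e}) v (fst (ends e)) \<or> reach ends (T - {e}) v (snd (ends e))"
proof -
  have "T \<subseteq> E" and con: "connected_on V T ends"
    using T unfolding spanning_trees_def spanning_tree_def by auto
  then have "fst (ends e) \<in> V"
    using mg e unfolding multigraph_def by blast
  with con v have "reach ends T v (fst (ends e))"
    unfolding connected_on_def by blast
  from reach_remove_edge[OF this, of e] show ?thesis by auto
qed

lemma two_forest_sides_of_edge:
  assumes F: "F \<in> two_forests V E ends s t" and pV: "p \<in> V" and qV: "q \<in> V"
    and npq: "\<not> reach ends F p q"
  shows "(reach ends F p s \<and> reach ends F q t) \<or> (reach ends F p t \<and> reach ends F q s)"
proof -
  have "reach ends F p s \<or> reach ends F p t" "reach ends F q s \<or> reach ends F q t"
    using F pV qV unfolding two_forests_def by auto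
  with npq show ?thesis
    by (meson reach_sym reach_trans)
qed

lemma spanning_tree_insert_edge:
  assumes mg: "multigraph V E ends" and eE: "e \<in> E"
    and F: "F \<in> two_forests V E ends s t" and npq: "\<not> reach ends F (fst (ends e)) (snd (ends e))"
  shows "insert e F \<in> spanning_trees V E ends"
proof -
  let ?p = "fst (ends e)" and ?q = "snd (ends e)"
  have FE: "F \<subseteq> E" and acy: "acyclic_edges F ends"
    and sides: "\<forall>v\<in>V. reach ends F v s \<or> reach ends F v t"
    using F unfolding two_forests_def by auto
  have mono: "reach ends F u w \<Longrightarrow> reach ends (insert e F) u w" for u w
    using reach_mono by (metis subset_insertI)
  have "?p \<in> V" "?q \<in> V"
    using mg eE unfolding multigraph_def by auto
  then have "(reach ends F ?p s \<and> reach ends F ?q t) \<or> (reach ends F ?p t \<and> reach ends F ?q s)"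
    using two_forest_sides_of_edge[OF F _ _ npq] by blast
  then have st: "reach ends (insert e F) s t"
    using mono reach_edge[of e "insert e F" ends] by (meson insertI1 reach_sym reach_trans)
  have "connected_on V (insert e F) ends"
    unfolding connected_on_def
  proof (intro ballI)
    have to_s: "reach ends (insert e F) v s" if "v \<in> V" for v
      using sides that st mono by (meson reach_sym reach_trans)
    fix a b assume "a \<in> V" "b \<in> V"
    then have "reach ends (insert e F) a s" "reach ends (insert e F) b s"
      by (simp_all add: to_s)
    then show "reach ends (insert e F) a b"
      by (meson reach_sym reach_trans)
  qed
  with FE eE acyclic_edges_insert[OF acy npq] show ?thesis
    unfolding spanning_trees_def spanning_tree_def by blast
qed

lemma two_forest_remove_edge:
  assumes mg: "multigraph V E ends" and T: "T \<in> spanning_trees V E ends" and e: "e \<in> T"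
    and nst: "\<not> reach ends (T - {e}) s t" and sV: "s \<in> V" and tV: "t \<in> V"
  shows "T - {e} \<in> two_forests V E ends s t"
proof -
  have TE: "T \<subseteq> E" and acy: "acyclic_edges T ends"
    using T unfolding spanning_trees_def spanning_tree_def by auto
  have "reach ends (T - {e}) v s \<or> reach ends (T - {e}) v t" if "v \<in> V" for v
  proof -
    note sides = spanning_tree_remove_edge_sides[OF mg T e]
    from sides[OF that] sides[OF sV] sides[OF tV] nst show ?thesis
      by (meson reach_sym reach_trans)
  qed
  with TE acyclic_edges_subset[OF acy] nst show ?thesis
    unfolding two_forests_def by blast
qed

lemma bij_betw_insert_edge_two_forests:
  assumes mg: "multigraph V E ends" and eE: "e \<in> E" and sV: "s \<in> V" and tV: "t \<in> V"
  shows "bij_betw (insert e) {F \<in> two_forests V E ends s t. \<not> reach ends F (fst (ends e)) (snd (ends e))}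
           {T \<in> spanning_trees V E ends. e \<in> T \<and> \<not> reach ends (T - {e}) s t}"
proof (rule bij_betw_byWitness[where f' = "\<lambda>T. T - {e}"])
  have eF: "e \<notin> F" if "\<not> reach ends F (fst (ends e)) (snd (ends e))" for F
    using that reach_edge by metis
  then show "\<forall>F\<in>{F \<in> two_forests V E ends s t. \<not> reach ends F (fst (ends e)) (snd (ends e))}.
      insert e F - {e} = F"
    by auto
  show "\<forall>T\<in>{T \<in> spanning_trees V E ends. e \<in> T \<and> \<not> reach ends (T - {e}) s t}. insert e (T - {e}) = T"
    by auto
  show "insert e ` {F \<in> two_forests V E ends s t. \<not> reach ends F (fst (ends e)) (snd (ends e))}
        \<subseteq> {T \<in> spanning_trees V E ends. e \<in> T \<and> \<not> reach ends (T - {e}) s t}"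
    using spanning_tree_insert_edge[OF mg eE] eF unfolding two_forests_def by auto
  have "\<not> reach ends (T - {e}) (fst (ends e)) (snd (ends e))"
    if "T \<in> spanning_trees V E ends" "e \<in> T" for T
    using that unfolding spanning_trees_def spanning_tree_def acyclic_edges_def by blast
  then show "(\<lambda>T. T - {e}) ` {T \<in> spanning_trees V E ends. e \<in> T \<and> \<not> reach ends (T - {e}) s t}
        \<subseteq> {F \<in> two_forests V E ends s t. \<not> reach ends F (fst (ends e)) (snd (ends e))}"
    using two_forest_remove_edge[OF mg _ _ _ sV tV] by blast
qed

section \<open>Counting two-forests\<close>

definition t_side_count :: "'a set \<Rightarrow> 'e set \<Rightarrow> ('e \<Rightarrow> 'a \<times> 'a) \<Rightarrow> 'a \<Rightarrow> 'a \<Rightarrow> 'a \<Rightarrow> real" where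
  "t_side_count V E ends s t v = real (card {F \<in> two_forests V E ends s t. reach ends F v t})"

lemma two_forest_not_reach: "F \<in> two_forests V E ends x y \<Longrightarrow> \<not> reach ends F x y"
  unfolding two_forests_def by blast

lemma two_forest_side_iff:
  assumes "F \<in> two_forests V E ends s t" and "v \<in> V"
  shows "reach ends F v s \<longleftrightarrow> \<not> reach ends F v t"
proof -
  have "reach ends F v s \<or> reach ends F v t" and "\<not> reach ends F s t"
    using assms unfolding two_forests_def by auto
  then show ?thesis
    by (meson reach_sym reach_trans)
qed

lemma two_forests_shift:
  assumes nst: "\<not> reach ends F s t" and tV: "t \<in> V"
  shows "F \<in> two_forests V E ends v s \<longleftrightarrow> F \<in> two_forests V E ends s t \<and> reach ends F v t"
proof
  assume "F \<in> two_forests V E ends v s"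
  then have FE: "F \<subseteq> E" and acy: "acyclic_edges F ends"
    and sides: "\<forall>w\<in>V. reach ends F w v \<or> reach ends F w s"
    unfolding two_forests_def by auto
  have tv: "reach ends F t v"
    using sides tV nst by (meson reach_sym)
  then have "\<forall>w\<in>V. reach ends F w s \<or> reach ends F w t"
    using sides by (meson reach_sym reach_trans)
  with FE acy nst reach_sym[OF tv] show "F \<in> two_forests V E ends s t \<and> reach ends F v t"
    unfolding two_forests_def by blast
next
  assume "F \<in> two_forests V E ends s t \<and> reach ends F v t"
  then have FE: "F \<subseteq> E" and acy: "acyclic_edges F ends"
    and sides: "\<forall>w\<in>V. reach ends F w s \<or> reach ends F w t" and vt: "reach ends F v t"
    unfolding two_forests_def by auto
  have "\<not> reach ends F v s"
    using nst vt by (meson reach_sym reach_trans)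
  moreover have "\<forall>w\<in>V. reach ends F w v \<or> reach ends F w s"
    using sides vt by (meson reach_sym reach_trans)
  ultimately show "F \<in> two_forests V E ends v s"
    unfolding two_forests_def using FE acy by blast
qed

lemma two_forests_joined:
  assumes "reach ends F s t"
  shows "F \<in> two_forests V E ends v s \<longleftrightarrow> F \<in> two_forests V E ends v t"
proof -
  have "reach ends F w s \<longleftrightarrow> reach ends F w t" for w
    using assms by (meson reach_sym reach_trans)
  then show ?thesis
    unfolding two_forests_def by simp
qed

lemma card_two_forests_diff:
  assumes mg: "multigraph V E ends" and vV: "v \<in> V" and sV: "s \<in> V" and tV: "t \<in> V"
  shows "real (card (two_forests V E ends v s)) - real (card (two_forests V E ends v t))
       = 2 * t_side_count V E ends s t v - real (card (two_forests V E ends s t))"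
proof -
  let ?S = "two_forests V E ends s t"
  have split: "card (two_forests V E ends v x)
      = card {F \<in> two_forests V E ends v x. \<not> reach ends F s t}
        + card {F \<in> two_forests V E ends v x. reach ends F s t}" for x
    by (rule card_eq_card_filter_add_card_filter_not[OF finite_two_forests[of V E ends v x, OF mg],
          where P = "\<lambda>F. \<not> reach ends F s t", unfolded not_not])
  have "{F \<in> two_forests V E ends v s. \<not> reach ends F s t} = {F \<in> ?S. reach ends F v t}"
    using two_forests_shift[OF _ tV, where E = E and s = s and v = v]
      two_forest_not_reach[where V = V and E = E and x = s and y = t] by blast
  moreover have "{F \<in> two_forests V E ends v t. \<not> reach ends F s t} = {F \<in> ?S. \<not> reach ends F v t}"
  proof -
    have "F \<in> two_forests V E ends v t \<longleftrightarrow> F \<in> ?S \<and> reach ends F v s" if "\<not> reach ends F s t" for F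
      using two_forests_shift[where F = F and s = t and t = s and E = E and ends = ends and v = v, OF _ sV] that
      unfolding two_forests_commute[of V E ends t s] reach_commute[of ends F t s] by blast
    then show ?thesis
      using two_forest_side_iff[OF _ vV, where E = E and s = s and t = t]
        two_forest_not_reach[where V = V and E = E and x = s and y = t] by blast
  qed
  moreover have "{F \<in> two_forests V E ends v s. reach ends F s t} = {F \<in> two_forests V E ends v t. reach ends F s t}"
    using two_forests_joined[where V = V and E = E and ends = ends and v = v and s = s and t = t] by blast
  moreover have "card ?S = card {F \<in> ?S. reach ends F v t} + card {F \<in> ?S. \<not> reach ends F v t}"
    by (rule card_eq_card_filter_add_card_filter_not[OF finite_two_forests[OF mg]])
  ultimately show ?thesis
    unfolding t_side_count_def split[of s] split[of t] by simp
qed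

lemma num_trees_ident_diff:
  assumes mg: "multigraph V E ends" and vV: "v \<in> V" and sV: "s \<in> V" and tV: "t \<in> V"
  shows "real (num_trees_ident V E ends v s) - real (num_trees_ident V E ends v t)
       = 2 * t_side_count V E ends s t v - real (num_trees_ident V E ends s t)"
  using card_two_forests_diff[OF assms] num_trees_ident_eq_card_two_forests[OF mg] vV sV
  by simp

definition cut_edges :: "('e \<Rightarrow> 'a \<times> 'a) \<Rightarrow> 'e set \<Rightarrow> 'a \<Rightarrow> 'a \<Rightarrow> 'e set" where
  "cut_edges ends F u v = {e \<in> F. \<not> reach ends (F - {e}) u v}"

text \<open>In a forest the cut edges between \<open>s\<close> and \<open>c\<close> form the path from \<open>s\<close> to \<open>c\<close>; summing the
  increments of \<open>\<phi>\<close> along it, each edge oriented towards \<open>c\<close>, telescopes.\<close>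

lemma sum_cut_edges_telescope:
  fixes \<phi> :: "'a \<Rightarrow> real"
  assumes acy: "acyclic_edges F ends" and fin: "finite F" and "reach ends F s c"
  shows "(\<Sum>e\<in>cut_edges ends F s c.
            if reach ends (F - {e}) c (fst (ends e)) then \<phi> (fst (ends e)) - \<phi> (snd (ends e))
            else \<phi> (snd (ends e)) - \<phi> (fst (ends e))) = \<phi> c - \<phi> s"
proof -
  define g where "g c e = (if e \<in> cut_edges ends F s c then
      if reach ends (F - {e}) c (fst (ends e)) then \<phi> (fst (ends e)) - \<phi> (snd (ends e))
      else \<phi> (snd (ends e)) - \<phi> (fst (ends e)) else 0)" for c e
  have "(\<Sum>e\<in>F. g c e) = \<phi> c - \<phi> s"
    using \<open>reach ends F s c\<close> unfolding reach_def
  proof (induction rule: rtranclp_induct)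
    case base
    show ?case unfolding g_def cut_edges_def by simp
  next
    case (step b c)
    from step(2) obtain f where f: "f \<in> F" "ends f = (b, c) \<or> ends f = (c, b)"
      unfolding adj_def by blast
    have same: "g c e = g b e" if "e \<noteq> f" for e
    proof -
      have "f \<in> F - {e}"
        using f(1) that by blast
      then have "reach ends (F - {e}) b c"
        using f(2) by (rule reach_edge_ends)
      then have "reach ends (F - {e}) s c \<longleftrightarrow> reach ends (F - {e}) s b"
        "reach ends (F - {e}) c x \<longleftrightarrow> reach ends (F - {e}) b x" for x
        by (meson reach_sym reach_trans)+
      then show ?thesis
        unfolding g_def cut_edges_def by simp
    qed
    have "\<not> reach ends (F - {f}) (fst (ends f)) (snd (ends f))"
      using acy f(1) unfolding acyclic_edges_def by blast
    then have sep: "\<not> reach ends (F - {f}) b c" "\<not> reach ends (F - {f}) c b"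
      using f(2) reach_commute by (metis fst_conv snd_conv)+
    have "reach ends (F - {f}) s b \<or> reach ends (F - {f}) s c"
      using reach_remove_edge[OF step(1)[folded reach_def], of f] f(2) by auto
    then have "reach ends (F - {f}) s b \<noteq> reach ends (F - {f}) s c"
      using sep by (meson reach_sym reach_trans)
    then have jump: "g c f - g b f = \<phi> c - \<phi> b"
      using f sep unfolding g_def cut_edges_def by auto
    have "(\<Sum>e\<in>F. g c e) - (\<Sum>e\<in>F. g b e) = (\<Sum>e\<in>F. g c e - g b e)"
      by (simp add: sum_subtractf)
    also have "\<dots> = g c f - g b f"
      using fin f(1) by (subst sum.remove) (auto simp: same)
    finally show ?case
      using step.IH jump by simp
  qed
  then show ?thesis
    unfolding cut_edges_def sum.inter_filter[OF fin] g_def by simp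
qed

lemma card_eq_sum_indicator:
  "finite A \<Longrightarrow> real (card {x \<in> A. P x}) = (\<Sum>x\<in>A. if P x then 1 else 0)"
  by (simp add: sum.If_cases Int_def)

lemma t_side_count_edge_diff:
  assumes mg: "multigraph V E ends" and eE: "e \<in> E" and sV: "s \<in> V" and tV: "t \<in> V"
  shows "t_side_count V E ends s t (fst (ends e)) - t_side_count V E ends s t (snd (ends e)) =
    (\<Sum>T\<in>{T \<in> spanning_trees V E ends. e \<in> cut_edges ends T s t}.
        if reach ends (T - {e}) t (fst (ends e)) then 1 else -1)"
proof -
  let ?p = "fst (ends e)" and ?q = "snd (ends e)"
  let ?S = "two_forests V E ends s t"
  define ind where "ind v F = (if reach ends F v t then 1 else (0::real))" for v F
  define orient where "orient T = (if reach ends (T - {e}) t ?p then 1 else (-1::real))" for T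
  have fS: "finite ?S"
    by (rule finite_two_forests[OF mg])
  have pV: "?p \<in> V" "?q \<in> V"
    using mg eE unfolding multigraph_def by auto
  have "t_side_count V E ends s t ?p - t_side_count V E ends s t ?q = (\<Sum>F\<in>?S. ind ?p F - ind ?q F)"
    unfolding t_side_count_def card_eq_sum_indicator[OF fS] ind_def by (simp add: sum_subtractf)
  also have "\<dots> = (\<Sum>F\<in>?S. if \<not> reach ends F ?p ?q then ind ?p F - ind ?q F else 0)"
  proof (rule sum.cong[OF refl])
    fix F
    have "reach ends F ?p ?q \<Longrightarrow> reach ends F ?p t \<longleftrightarrow> reach ends F ?q t"
      by (meson reach_sym reach_trans)
    then show "ind ?p F - ind ?q F = (if \<not> reach ends F ?p ?q then ind ?p F - ind ?q F else 0)"
      unfolding ind_def by auto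
  qed
  also have "\<dots> = (\<Sum>F\<in>{F\<in>?S. \<not> reach ends F ?p ?q}. orient (insert e F))"
  proof (subst sum.inter_filter[OF fS, symmetric], rule sum.cong[OF refl])
    fix F assume "F \<in> {F\<in>?S. \<not> reach ends F ?p ?q}"
    then have F: "F \<in> ?S" and npq: "\<not> reach ends F ?p ?q" by auto
    have "insert e F - {e} = F"
      using npq reach_edge by fastforce
    moreover have "(reach ends F ?p s \<and> reach ends F ?q t) \<or> (reach ends F ?p t \<and> reach ends F ?q s)"
      by (rule two_forest_sides_of_edge[OF F pV npq])
    with two_forest_not_reach[OF F] have "reach ends F ?q t \<longleftrightarrow> \<not> reach ends F ?p t"
      by (meson reach_sym reach_trans)
    ultimately show "ind ?p F - ind ?q F = orient (insert e F)"
      unfolding ind_def orient_def by (simp add: reach_commute[of ends F t])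
  qed
  also have "\<dots> = (\<Sum>T\<in>{T \<in> spanning_trees V E ends. e \<in> T \<and> \<not> reach ends (T - {e}) s t}. orient T)"
    by (rule sum.reindex_bij_betw[OF bij_betw_insert_edge_two_forests[OF mg eE sV tV]])
  finally show ?thesis
    unfolding orient_def cut_edges_def by simp
qed

lemma sum_t_side_count_diff_sq:
  assumes cg: "connected_graph V E ends" and sV: "s \<in> V" and tV: "t \<in> V"
  shows "(\<Sum>e\<in>E. (t_side_count V E ends s t (fst (ends e)) - t_side_count V E ends s t (snd (ends e)))\<^sup>2)
       = real (num_trees V E ends) * real (num_trees_ident V E ends s t)"
proof -
  have mg: "multigraph V E ends"
    using cg unfolding connected_graph_def by blast
  have fE: "finite E"
    using mg unfolding multigraph_def by blast
  let ?a = "t_side_count V E ends s t"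
  let ?Tr = "spanning_trees V E ends"
  define D where "D e = ?a (fst (ends e)) - ?a (snd (ends e))" for e
  define orient where "orient T e = (if reach ends (T - {e}) t (fst (ends e)) then 1 else (-1::real))" for T e
  have D: "D e = (\<Sum>T\<in>?Tr. if e \<in> cut_edges ends T s t then orient T e else 0)" if "e \<in> E" for e
  proof -
    have "D e = (\<Sum>T\<in>{T \<in> ?Tr. e \<in> cut_edges ends T s t}. orient T e)"
      unfolding D_def orient_def by (rule t_side_count_edge_diff[OF mg that sV tV])
    then show ?thesis
      by (simp add: sum.inter_filter[OF finite_spanning_trees[OF mg]])
  qed
  have tree_sum: "(\<Sum>e\<in>E. if e \<in> cut_edges ends T s t then orient T e * D e else 0) = ?a t - ?a s"
    if T: "T \<in> ?Tr" for T
  proof -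
    have TE: "T \<subseteq> E" and "connected_on V T ends" and acy: "acyclic_edges T ends"
      using T unfolding spanning_trees_def spanning_tree_def by auto
    then have st: "reach ends T s t"
      using sV tV unfolding connected_on_def by blast
    have "cut_edges ends T s t \<subseteq> E"
      using TE unfolding cut_edges_def by blast
    then have "(\<Sum>e\<in>E. if e \<in> cut_edges ends T s t then orient T e * D e else 0)
        = (\<Sum>e\<in>cut_edges ends T s t. orient T e * D e)"
      using fE by (simp add: sum.inter_filter[symmetric] Int_absorb1 flip: Int_def)
    also have "\<dots> = ?a t - ?a s"
    proof -
      have "orient T e * D e = (if reach ends (T - {e}) t (fst (ends e))
          then ?a (fst (ends e)) - ?a (snd (ends e)) else ?a (snd (ends e)) - ?a (fst (ends e)))" for e
        unfolding orient_def D_def by simp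
      then show ?thesis
        using sum_cut_edges_telescope[OF acy finite_subset[OF TE fE] st, of ?a] by simp
    qed
    finally show ?thesis .
  qed
  have "(D e)\<^sup>2 = (\<Sum>T\<in>?Tr. if e \<in> cut_edges ends T s t then orient T e * D e else 0)"
    if "e \<in> E" for e
  proof -
    have "(D e)\<^sup>2 = (\<Sum>T\<in>?Tr. if e \<in> cut_edges ends T s t then orient T e else 0) * D e"
      unfolding power2_eq_square by (subst (1) D[OF that]) (rule refl)
    also have "\<dots> = (\<Sum>T\<in>?Tr. if e \<in> cut_edges ends T s t then orient T e * D e else 0)"
      unfolding sum_distrib_right by (intro sum.cong) auto
    finally show ?thesis .
  qed
  then have "(\<Sum>e\<in>E. (D e)\<^sup>2) = (\<Sum>e\<in>E. \<Sum>T\<in>?Tr. if e \<in> cut_edges ends T s t then orient T e * D e else 0)"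
    by (rule sum.cong[OF refl])
  also have "\<dots> = (\<Sum>T\<in>?Tr. ?a t - ?a s)"
    by (subst sum.swap) (simp add: tree_sum)
  also have "?a t = real (num_trees_ident V E ends s t)"
    using num_trees_ident_eq_card_two_forests[OF mg sV]
    unfolding t_side_count_def by simp
  also have "?a s = 0"
  proof -
    have none: "{F \<in> two_forests V E ends s t. reach ends F s t} = {}"
      using two_forest_not_reach[of _ V E ends s t] by blast
    show ?thesis
      unfolding t_side_count_def none by simp
  qed
  finally show ?thesis
    unfolding D_def num_trees_def spanning_trees_def by simp
qed

section \<open>Bridges and paths\<close>

lemma bridge_ends_not_reach:
  assumes "connected_graph V E ends" and "is_bridge V E ends e"
  shows "\<not> reach ends (E - {e}) (fst (ends e)) (snd (ends e))"
proof
  assume cycle: "reach ends (E - {e}) (fst (ends e)) (snd (ends e))"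
  have "connected_on V E ends"
    using assms(1) unfolding connected_graph_def by blast
  then have "connected_on V (E - {e}) ends"
    using reach_remove_cycle_edge[OF cycle] unfolding connected_on_def by blast
  with assms(2) show False
    unfolding is_bridge_def by blast
qed

lemma bridge_in_spanning_tree:
  assumes "is_bridge V E ends e" and "T \<in> spanning_trees V E ends"
  shows "e \<in> T"
proof (rule ccontr)
  assume "e \<notin> T"
  with assms(2) have "T \<subseteq> E - {e}" and "connected_on V T ends"
    unfolding spanning_trees_def spanning_tree_def by auto
  then have "connected_on V (E - {e}) ends"
    unfolding connected_on_def using reach_mono by metis
  with assms(1) show False
    unfolding is_bridge_def by blast
qed

lemma bridge_reach_remove_tree_iff:
  assumes cg: "connected_graph V E ends" and br: "is_bridge V E ends e"
    and T: "T \<in> spanning_trees V E ends" and uV: "u \<in> V" and vV: "v \<in> V"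
  shows "reach ends (T - {e}) u v \<longleftrightarrow> reach ends (E - {e}) u v"
proof
  have mono: "reach ends (T - {e}) x y \<Longrightarrow> reach ends (E - {e}) x y" for x y
    using T reach_mono[of ends "T - {e}" x y "E - {e}"]
    unfolding spanning_trees_def spanning_tree_def by blast
  then show "reach ends (T - {e}) u v \<Longrightarrow> reach ends (E - {e}) u v" .
  assume uv: "reach ends (E - {e}) u v"
  have mg: "multigraph V E ends"
    using cg unfolding connected_graph_def by blast
  note sides = spanning_tree_remove_edge_sides[OF mg T bridge_in_spanning_tree[OF br T]]
  from sides[OF uV] sides[OF vV] uv bridge_ends_not_reach[OF cg br]
  show "reach ends (T - {e}) u v"
    by (meson mono reach_sym reach_trans)
qed

lemma t_side_count_diff_bridge:
  assumes cg: "connected_graph V E ends" and sV: "s \<in> V" and tV: "t \<in> V"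
    and br: "is_bridge V E ends e"
  shows "(t_side_count V E ends s t (fst (ends e)) - t_side_count V E ends s t (snd (ends e)))\<^sup>2 =
         (if reach ends (E - {e}) s t then 0 else (real (num_trees V E ends))\<^sup>2)"
proof -
  let ?Tr = "spanning_trees V E ends"
  define c where "c = (if reach ends (E - {e}) t (fst (ends e)) then 1 else (-1::real))"
  have mg: "multigraph V E ends"
    using cg unfolding connected_graph_def by blast
  have eE: "e \<in> E" and pV: "fst (ends e) \<in> V"
    using br mg unfolding is_bridge_def multigraph_def by auto
  have trees: "{T \<in> ?Tr. e \<in> cut_edges ends T s t} = (if reach ends (E - {e}) s t then {} else ?Tr)"
    using bridge_in_spanning_tree[OF br] bridge_reach_remove_tree_iff[OF cg br _ sV tV]
    unfolding cut_edges_def by auto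
  have orient: "(if reach ends (T - {e}) t (fst (ends e)) then 1 else -1) = c" if "T \<in> ?Tr" for T
    unfolding c_def using bridge_reach_remove_tree_iff[OF cg br that tV pV] by simp
  have "t_side_count V E ends s t (fst (ends e)) - t_side_count V E ends s t (snd (ends e))
      = (if reach ends (E - {e}) s t then 0 else real (num_trees V E ends) * c)"
    unfolding t_side_count_edge_diff[OF mg eE sV tV] trees
    using orient by (simp add: num_trees_def spanning_trees_def)
  then show ?thesis
    unfolding c_def by (simp add: power_mult_distrib)
qed

lemma path_ends:
  assumes "is_path V E ends s t vs es"
  shows "vs ! 0 = s" and "vs ! length es = t"
proof -
  have l: "length vs = length es + 1" "hd vs = s" "last vs = t"
    using assms unfolding is_path_def by auto
  then show "vs ! 0 = s"
    by (metis hd_conv_nth list.size(3) zero_neq_one add_is_0)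
  show "vs ! length es = t"
    using l by (metis add_diff_cancel_right' last_conv_nth list.size(3) zero_neq_one add_is_0)
qed

lemma path_edge_ends:
  assumes "is_path V E ends s t vs es" and "i < length es"
  shows "es ! i \<in> E" and "ends (es ! i) = (vs ! i, vs ! Suc i) \<or> ends (es ! i) = (vs ! Suc i, vs ! i)"
  using assms unfolding is_path_def by auto

lemma reach_path_segment:
  assumes p: "is_path V E ends s t vs es" and "j + d \<le> length es"
    and "\<forall>m. j \<le> m \<and> m < j + d \<longrightarrow> es ! m \<in> X"
  shows "reach ends X (vs ! j) (vs ! (j + d))"
  using assms(2,3)
proof (induction d)
  case (Suc d)
  then have IH: "reach ends X (vs ! j) (vs ! (j + d))" and e: "es ! (j + d) \<in> X"
    by auto
  have "j + d < length es"
    using Suc.prems(1) by simp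
  from reach_edge_ends[where ends = ends and x = "vs ! (j + d)" and y = "vs ! Suc (j + d)", OF e
      path_edge_ends(2)[OF p this]]
  have "reach ends X (vs ! (j + d)) (vs ! Suc (j + d))" .
  with IH show ?case
    by (metis add_Suc_right reach_trans)
qed simp

lemma distinct_path_edges:
  assumes p: "is_path V E ends s t vs es"
  shows "distinct es"
  unfolding distinct_conv_nth
proof (intro allI impI)
  fix i m assume i: "i < length es" and m: "m < length es" and "i \<noteq> m"
  have d: "distinct vs" and l: "length vs = length es + 1"
    using p unfolding is_path_def by auto
  have idx: "vs ! a = vs ! b \<longleftrightarrow> a = b" if "a \<le> length es" "b \<le> length es" for a b
    using d l that nth_eq_iff_index_eq by (metis Suc_eq_plus1 le_imp_less_Suc)
  have ends_set: "{fst (ends (es ! k)), snd (ends (es ! k))} = {vs ! k, vs ! Suc k}" if "k < length es" for k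
    using path_edge_ends(2)[OF p that] by auto
  show "es ! i \<noteq> es ! m"
  proof
    assume "es ! i = es ! m"
    then have "{vs ! i, vs ! Suc i} = {vs ! m, vs ! Suc m}"
      using ends_set[OF i] ends_set[OF m] by simp
    then have "(vs ! i = vs ! m \<and> vs ! Suc i = vs ! Suc m) \<or> (vs ! i = vs ! Suc m \<and> vs ! Suc i = vs ! m)"
      by (simp add: doubleton_eq_iff)
    moreover have "i \<le> length es" "Suc i \<le> length es" "m \<le> length es" "Suc m \<le> length es"
      using i m by simp_all
    ultimately have "i = m \<or> (i = Suc m \<and> Suc i = m)"
      using idx by blast
    with \<open>i \<noteq> m\<close> show False by linarith
  qed
qed

lemma is_path_take:
  assumes p: "is_path V E ends s t vs es" and k: "k < length vs"
  shows "is_path V E ends s (vs ! k) (take (Suc k) vs) (take k es)"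
  unfolding is_path_def
proof (intro conjI)
  have l: "length vs = length es + 1" and "hd vs = s" and "distinct vs" and "set vs \<subseteq> V"
    and edges: "\<forall>i < length es. es ! i \<in> E \<and>
        (ends (es ! i) = (vs ! i, vs ! Suc i) \<or> ends (es ! i) = (vs ! Suc i, vs ! i))"
    using p unfolding is_path_def by auto
  then show "length (take (Suc k) vs) = length (take k es) + 1"
    and "hd (take (Suc k) vs) = s" and "distinct (take (Suc k) vs)"
    and "set (take (Suc k) vs) \<subseteq> V"
    using k by (auto dest: in_set_takeD)
  show "last (take (Suc k) vs) = vs ! k"
    using k by (simp add: take_Suc_conv_app_nth)
  show "\<forall>i<length (take k es). take k es ! i \<in> E \<and>
      (ends (take k es ! i) = (take (Suc k) vs ! i, take (Suc k) vs ! Suc i) \<or>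
       ends (take k es ! i) = (take (Suc k) vs ! Suc i, take (Suc k) vs ! i))"
    using edges by simp
qed

lemma is_path_snoc:
  assumes p: "is_path V E ends s b vs es" and f: "f \<in> E" "ends f = (b, c) \<or> ends f = (c, b)"
    and c: "c \<in> V" "c \<notin> set vs"
  shows "is_path V E ends s c (vs @ [c]) (es @ [f])"
proof -
  have l: "length vs = length es + 1"
    using p unfolding is_path_def by simp
  then have "vs ! length es = b"
    using path_ends(2)[OF p] by simp
  with p f c l show ?thesis
    unfolding is_path_def by (auto simp: nth_append less_Suc_eq hd_append)
qed

lemma path_exists:
  assumes "reach ends E s t" and "s \<in> V"
  and mg: "multigraph V E ends"
  shows "\<exists>vs es. is_path V E ends s t vs es"
  using assms(1) unfolding reach_def
proof (induction rule: rtranclp_induct)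
  case base
  have "is_path V E ends s s [s] []"
    unfolding is_path_def using \<open>s \<in> V\<close> by simp
  then show ?case by blast
next
  case (step b c)
  from step.IH obtain vs es where p: "is_path V E ends s b vs es" by blast
  from step(2) obtain f where f: "f \<in> E" "ends f = (b, c) \<or> ends f = (c, b)"
    unfolding adj_def by blast
  have "c \<in> V"
    using mg f unfolding multigraph_def by (metis fst_conv snd_conv)
  show ?case
  proof (cases "c \<in> set vs")
    case True
    then obtain k where "k < length vs" "vs ! k = c"
      by (metis in_set_conv_nth)
    with is_path_take[OF p] show ?thesis by metis
  next
    case False
    with is_path_snoc[OF p f \<open>c \<in> V\<close>] show ?thesis by blast
  qed
qed

lemma bridge_on_path_iff:
  assumes cg: "connected_graph V E ends" and br: "is_bridge V E ends e"
    and sV: "s \<in> V" and tV: "t \<in> V"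
  shows "(\<exists>vs es. is_path V E ends s t vs es \<and> e \<in> set es) \<longleftrightarrow> \<not> reach ends (E - {e}) s t"
proof
  assume "\<exists>vs es. is_path V E ends s t vs es \<and> e \<in> set es"
  then obtain vs es i where p: "is_path V E ends s t vs es" and i: "i < length es" "es ! i = e"
    by (metis in_set_conv_nth)
  have avoid: "es ! m \<in> E - {e}" if "m < length es" "m \<noteq> i" for m
    using path_edge_ends(1)[OF p] distinct_path_edges[OF p] that i nth_eq_iff_index_eq by fastforce
  have "reach ends (E - {e}) (vs ! 0) (vs ! (0 + i))"
    by (rule reach_path_segment[OF p]) (use i avoid in auto)
  moreover have "reach ends (E - {e}) (vs ! Suc i) (vs ! (Suc i + (length es - Suc i)))"
    by (rule reach_path_segment[OF p]) (use i avoid in auto)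
  moreover have "Suc i + (length es - Suc i) = length es"
    using i by simp
  ultimately have "reach ends (E - {e}) s (vs ! i)" "reach ends (E - {e}) (vs ! Suc i) t"
    using path_ends[OF p] by (simp_all only: add_0)
  moreover have "\<not> reach ends (E - {e}) (vs ! i) (vs ! Suc i)"
    using bridge_ends_not_reach[OF cg br] path_edge_ends(2)[OF p i(1)] i(2) reach_commute
    by (metis fst_conv snd_conv)
  ultimately show "\<not> reach ends (E - {e}) s t"
    by (meson reach_sym reach_trans)
next
  assume nst: "\<not> reach ends (E - {e}) s t"
  have mg: "multigraph V E ends" and "reach ends E s t"
    using cg sV tV unfolding connected_graph_def connected_on_def by blast+
  then obtain vs es where p: "is_path V E ends s t vs es"
    using path_exists[OF _ sV] by blast
  have "e \<in> set es"
  proof (rule ccontr)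
    assume "e \<notin> set es"
    then have "reach ends (E - {e}) (vs ! 0) (vs ! (0 + length es))"
      using path_edge_ends(1)[OF p] by (intro reach_path_segment[OF p]) (auto simp: in_set_conv_nth)
    with nst path_ends[OF p] show False by simp
  qed
  with p show "\<exists>vs es. is_path V E ends s t vs es \<and> e \<in> set es" by blast
qed

lemma bridges_between_eq_card:
  assumes "connected_graph V E ends" and "s \<in> V" and "t \<in> V"
  shows "bridges_between V E ends s t = card {e \<in> E. is_bridge V E ends e \<and> \<not> reach ends (E - {e}) s t}"
proof -
  have "{e. is_bridge V E ends e \<and> (\<exists>vs es. is_path V E ends s t vs es \<and> e \<in> set es)}
      = {e \<in> E. is_bridge V E ends e \<and> \<not> reach ends (E - {e}) s t}"
    using bridge_on_path_iff[OF assms(1) _ assms(2,3)] unfolding is_bridge_def by blast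
  then show ?thesis
    unfolding bridges_between_def by simp
qed

lemma sum_bridges_t_side_count_diff_sq:
  assumes cg: "connected_graph V E ends" and sV: "s \<in> V" and tV: "t \<in> V"
  shows "(\<Sum>e\<in>{e \<in> E. is_bridge V E ends e}.
            (t_side_count V E ends s t (fst (ends e)) - t_side_count V E ends s t (snd (ends e)))\<^sup>2)
       = (real (num_trees V E ends))\<^sup>2 * real (bridges_between V E ends s t)"
proof -
  let ?B = "{e \<in> E. is_bridge V E ends e}"
  have "finite ?B"
    using cg unfolding connected_graph_def multigraph_def by simp
  have "(\<Sum>e\<in>?B. (t_side_count V E ends s t (fst (ends e)) - t_side_count V E ends s t (snd (ends e)))\<^sup>2)
      = (\<Sum>e\<in>?B. if \<not> reach ends (E - {e}) s t then (real (num_trees V E ends))\<^sup>2 else 0)"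
    by (rule sum.cong) (auto simp: t_side_count_diff_bridge[OF assms])
  also have "\<dots> = (\<Sum>e\<in>{e \<in> ?B. \<not> reach ends (E - {e}) s t}. (real (num_trees V E ends))\<^sup>2)"
    by (rule sum.inter_filter[OF \<open>finite ?B\<close>, symmetric])
  also have "{e \<in> ?B. \<not> reach ends (E - {e}) s t} = {e \<in> E. is_bridge V E ends e \<and> \<not> reach ends (E - {e}) s t}"
    by blast
  finally show ?thesis
    unfolding bridges_between_eq_card[OF assms] by simp
qed

lemma num_trees_ident_edge_bracket:
  assumes mg: "multigraph V E ends" and eE: "e \<in> E" and sV: "s \<in> V" and tV: "t \<in> V"
  shows "real (num_trees_ident V E ends (fst (ends e)) s) - real (num_trees_ident V E ends (fst (ends e)) t)
         - real (num_trees_ident V E ends (snd (ends e)) s) + real (num_trees_ident V E ends (snd (ends e)) t)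
       = 2 * (t_side_count V E ends s t (fst (ends e)) - t_side_count V E ends s t (snd (ends e)))"
proof -
  have "fst (ends e) \<in> V" and "snd (ends e) \<in> V"
    using mg eE unfolding multigraph_def by auto
  from this[THEN num_trees_ident_diff[OF mg _ sV tV]] show ?thesis
    unfolding right_diff_distrib by linarith
qed

theorem theorem4p14:
  fixes V :: "'a set" and E :: "'e set" and ends :: "'e \<Rightarrow> 'a \<times> 'a" and s t :: 'a
  assumes "connected_graph V E ends" and "s \<in> V" and "t \<in> V"
  defines "tG \<equiv> real (num_trees V E ends)"
      and "sq \<equiv> (\<lambda>e. (real (num_trees_ident V E ends (fst (ends e)) s)
                        - real (num_trees_ident V E ends (fst (ends e)) t)
                        - real (num_trees_ident V E ends (snd (ends e)) s)
                        + real (num_trees_ident V E ends (snd (ends e)) t))\<^sup>2)"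
  shows "(real (num_trees_ident V E ends s t)
           = real (bridges_between V E ends s t) * tG
             + (1 / (4 * tG)) * (\<Sum>e\<in>{e\<in>E. \<not> is_bridge V E ends e}. sq e))
         \<and> (real (num_trees_ident V E ends s t) = (1 / (4 * tG)) * (\<Sum>e\<in>E. sq e))"
proof -
  have mg: "multigraph V E ends" and fin: "finite E"
    using assms(1) unfolding connected_graph_def multigraph_def by auto
  let ?D = "\<lambda>e. t_side_count V E ends s t (fst (ends e)) - t_side_count V E ends s t (snd (ends e))"
  have sq: "sq e = 4 * (?D e)\<^sup>2" if "e \<in> E" for e
    unfolding sq_def num_trees_ident_edge_bracket[OF mg that assms(2,3)]
    by (simp add: power2_eq_square algebra_simps)
  have "tG > 0"
    using num_trees_pos[OF assms(1)] unfolding tG_def by simp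
  moreover have "(\<Sum>e\<in>E. sq e) = 4 * tG * real (num_trees_ident V E ends s t)"
    using sum_t_side_count_diff_sq[OF assms(1-3)] by (simp add: sq tG_def flip: sum_distrib_left)
  moreover have "(\<Sum>e\<in>{e\<in>E. is_bridge V E ends e}. sq e) = 4 * tG\<^sup>2 * real (bridges_between V E ends s t)"
    using sum_bridges_t_side_count_diff_sq[OF assms(1-3)] by (simp add: sq tG_def flip: sum_distrib_left)
  moreover note sum_filter_add_sum_filter_not[OF fin, of sq "is_bridge V E ends"]
  ultimately show ?thesis
    by (simp add: field_simps power2_eq_square)
qed

end
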